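(* Let $G=(V,E)$ be a graph on $V=\{1,\dots,n\}$ and $(\tilde g,\theta)$ a nominal configuration such that each of the sets $\{\tilde p^x_{i,\theta}\}_{i\in V}$, $\{\tilde p^y_{i,\theta}\}_{i\in V}$, $\{\tilde\phi_i\}_{i\in V}$ affinely spans $\mathbb R$. Then $\mathrm{null}(M(G,\tilde g,\theta))=\Pi(\tilde g,\theta)$ if and only if $\mathrm{rank}(M(G,\tilde g,\theta))=3n-6$.
   Context: $E\subseteq\{(i,k):i\ne k\}$, $(i,k)\in E$ means agent $k$ measures agent $i$. $R(\theta)$ is the $2\times2$ rotation by $\theta$, $\Theta=\mathrm{diag}(R(\theta),1)$. $\tilde g_i=[\tilde p_i^\top,\tilde\phi_i]^\top\in\mathbb R^3$, $\Theta^\top\tilde g_i=[\tilde p^x_{i,\theta},\tilde p^y_{i,\theta},\tilde\phi_i]^\top$; $\tilde p^x_{uv,\theta}=\tilde p^x_{u,\theta}-\tilde p^x_{v,\theta}$, similarly $y$, $\tilde\phi_{uv}=\tilde\phi_u-\tilde\phi_v$; $w_{uv}=\mathrm{diag}(\tilde p^x_{uv,\theta},\tilde p^y_{uv,\theta},\tilde\phi_{uv})$, $W_{uv}=w_{uv}\Theta^\top$. $C=\{(i,j,k)\in V^3:(i,k),(j,k)\in E,\ i<j\}$. $M(G,\tilde g,\theta)\in\mathbb R^{3n\times3n}$: the $k$-th $3$-block of $Mg$ is $\sum_{(i,j,k)\in C}(W_{jk}(g_i-g_k)+W_{ki}(g_j-g_k))$. $\Pi(\tilde g,\theta)=\{g\in\mathbb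 R^{3n}:g_i=\tau+\Theta\,\mathrm{diag}(s)\Theta^\top\tilde g_i\ \forall i,\ s,\tau\in\mathbb R^3\}$. A set of reals affinely spans $\mathbb R$ iff it contains two distinct elements. *)

theory Defs
  imports Complex_Main "Jordan_Normal_Form.DL_Rank" "Jordan_Normal_Form.Matrix_Kernel"
begin

(* Agents are indexed 0..n-1 (the paper uses 1..n).  A vector g in R^{3n} is a
   real vec of dimension 3n; its i-th 3-block is entries 3i, 3i+1, 3i+2. *)

definition blk :: "real vec \<Rightarrow> nat \<Rightarrow> real vec" where
  "blk g i = vec 3 (\<lambda>a. g $ (3 * i + a))"

definition Theta :: "real \<Rightarrow> real mat" where
  "Theta \<theta> = mat 3 3 (\<lambda>(r, c).
      if r = 0 \<and> c = 0 then cos \<theta> else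
      if r = 0 \<and> c = 1 then - sin \<theta> else
      if r = 1 \<and> c = 0 then sin \<theta> else
      if r = 1 \<and> c = 1 then cos \<theta> else
      if r = 2 \<and> c = 2 then 1 else 0)"

(* Theta^T gt_i = [p^x_{i,theta}, p^y_{i,theta}, phi_i] *)
definition rotc :: "real vec \<Rightarrow> real \<Rightarrow> nat \<Rightarrow> real vec" where
  "rotc gt \<theta> i = transpose_mat (Theta \<theta>) *\<^sub>v blk gt i"

definition w_mat :: "real vec \<Rightarrow> real \<Rightarrow> nat \<Rightarrow> nat \<Rightarrow> real mat" where
  "w_mat gt \<theta> u v = mat_diag 3 (\<lambda>a. rotc gt \<theta> u $ a - rotc gt \<theta> v $ a)"

definition W_mat :: "real vec \<Rightarrow> real \<Rightarrow> nat \<Rightarrow> nat \<Rightarrow> real mat" where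
  "W_mat gt \<theta> u v = w_mat gt \<theta> u v * transpose_mat (Theta \<theta>)"

definition triples :: "nat \<Rightarrow> (nat \<times> nat) set \<Rightarrow> (nat \<times> nat \<times> nat) set" where
  "triples n E = {(i, j, k). i < n \<and> j < n \<and> k < n \<and> (i, k) \<in> E \<and> (j, k) \<in> E \<and> i < j}"

definition M_block :: "nat \<Rightarrow> (nat \<times> nat) set \<Rightarrow> real vec \<Rightarrow> real \<Rightarrow> real vec \<Rightarrow> nat \<Rightarrow> real vec" where
  "M_block n E gt \<theta> g k =
     finsum_vec TYPE(real) 3
       (\<lambda>(i, j, k'). W_mat gt \<theta> j k *\<^sub>v (blk g i - blk g k) + W_mat gt \<theta> k i *\<^sub>v (blk g j - blk g k))
       {(i, j, k'). (i, j, k') \<in> triples n E \<and> k' = k}"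

definition M_apply :: "nat \<Rightarrow> (nat \<times> nat) set \<Rightarrow> real vec \<Rightarrow> real \<Rightarrow> real vec \<Rightarrow> real vec" where
  "M_apply n E gt \<theta> g = vec (3 * n) (\<lambda>r. M_block n E gt \<theta> g (r div 3) $ (r mod 3))"

definition M_mat :: "nat \<Rightarrow> (nat \<times> nat) set \<Rightarrow> real vec \<Rightarrow> real \<Rightarrow> real mat" where
  "M_mat n E gt \<theta> = mat (3 * n) (3 * n) (\<lambda>(r, c). M_apply n E gt \<theta> (unit_vec (3 * n) c) $ r)"

definition Pi_set :: "nat \<Rightarrow> real vec \<Rightarrow> real \<Rightarrow> real vec set" where
  "Pi_set n gt \<theta> = {g \<in> carrier_vec (3 * n). \<exists>s \<in> carrier_vec 3. \<exists>\<tau> \<in> carrier_vec 3.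
      \<forall>i < n. blk g i = \<tau> + (Theta \<theta> * mat_diag 3 (\<lambda>a. s $ a) * transpose_mat (Theta \<theta>)) *\<^sub>v blk gt i}"

(* a finite family of reals affinely spans R iff it has two distinct members *)
definition aff_spans_R :: "real set \<Rightarrow> bool" where
  "aff_spans_R S \<longleftrightarrow> (\<exists>a \<in> S. \<exists>b \<in> S. a \<noteq> b)"

end

theory Submission
  imports Defs
begin

text \<open>
  Write \<open>q\<^sub>i = \<Theta>\<^sup>T g~\<^sub>i\<close>. A member of \<open>\<Pi>\<close> has blocks \<open>g\<^sub>i = \<tau> + \<Theta> diag(s) q\<^sub>i\<close>, so
  \<open>W\<^sub>j\<^sub>k (g\<^sub>i - g\<^sub>k)\<close> has entries \<open>(q\<^sub>j - q\<^sub>k)\<^sub>a s\<^sub>a (q\<^sub>i - q\<^sub>k)\<^sub>a\<close> and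
  \<open>W\<^sub>k\<^sub>i (g\<^sub>j - g\<^sub>k)\<close> has entries \<open>(q\<^sub>k - q\<^sub>i)\<^sub>a s\<^sub>a (q\<^sub>j - q\<^sub>k)\<^sub>a\<close>: they cancel, so
  \<open>\<Pi> \<subseteq> null M\<close>. The parametrisation \<open>(s, \<tau>) \<mapsto> g\<close> of \<open>\<Pi>\<close> is linear, and it is injective
  because each coordinate of the \<open>q\<^sub>i\<close> takes two distinct values. So \<open>\<Pi>\<close> is a
  6-dimensional subspace of \<open>null M\<close>; it is all of it iff \<open>dim (null M) = 6\<close>, i.e. by
  rank-nullity iff \<open>rank M = 3n - 6\<close>.
\<close>

lemma rank_plus_kernel_dim:
  fixes A :: "'a::field mat"
  assumes A: "A \<in> carrier_mat nr nc"
  shows "vec_space.rank nr A + kernel_dim A = nc"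
proof -
  interpret NC: vec_space "TYPE('a)" nc .
  interpret NR: vec_space "TYPE('a)" nr .
  interpret K: kernel nr nc A by unfold_locales (rule A)
  interpret L: linear_map class_ring "module_vec TYPE('a) nc" "module_vec TYPE('a) nr"
    "\<lambda>v. A *\<^sub>v v"
  proof unfold_locales
    show "(\<lambda>v. A *\<^sub>v v) \<in>
        LinearCombinations.module_hom class_ring (module_vec TYPE('a) nc) (module_vec TYPE('a) nr)"
      unfolding LinearCombinations.module_hom_def using A
      by (auto simp: mult_add_distrib_mat_vec mult_mat_vec module_vec_simps)
  qed
  have im: "L.imT = NR.span (set (cols A))"
    using NR.col_space_eq[OF A] A unfolding L.im_def NR.col_space_def by auto
  have ker: "L.kerT = mat_kernel A"
    using A unfolding L.ker_def mat_kernel_def by (auto simp: module_vec_simps)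
  have "vectorspace.dim class_ring (NR.vs L.imT) + vectorspace.dim class_ring (NC.vs L.kerT)
      = NC.dim"
    by (rule L.rank_nullity) simp
  then show ?thesis unfolding im ker NR.rank_def NC.dim_is_n using A K.kernel_dim by simp
qed

lemma mult_unit_vec_eq_col:
  fixes B :: "'a::comm_ring_1 mat"
  shows "B \<in> carrier_mat n k \<Longrightarrow> j < k \<Longrightarrow> B *\<^sub>v unit_vec k j = col B j"
  by (intro eq_vecI) (auto simp: scalar_prod_right_unit)

lemma (in vec_space) distinct_cols_lin_indpt_if_inj:
  assumes B: "B \<in> carrier_mat n k"
    and inj: "\<And>x. x \<in> carrier_vec k \<Longrightarrow> B *\<^sub>v x = 0\<^sub>v n \<Longrightarrow> x = 0\<^sub>v k"
  shows "distinct (cols B)" and "lin_indpt (set (cols B))"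
proof -
  have "i = j" if ij: "i < k" "j < k" "col B i = col B j" for i j
  proof -
    have "B *\<^sub>v (unit_vec k i - unit_vec k j) = 0\<^sub>v n"
      using B ij by (simp add: mult_minus_distrib_mat_vec mult_unit_vec_eq_col)
    then have "(unit_vec k i - unit_vec k j :: 'a vec) $ i = 0\<^sub>v k $ i"
      using inj[of "unit_vec k i - unit_vec k j"] by simp
    then show "i = j" using ij by (simp split: if_splits)
  qed
  then show dist: "distinct (cols B)" using B unfolding distinct_conv_nth by (auto simp: cols_length)
  show "lin_indpt (set (cols B))"
  proof
    assume "lin_dep (set (cols B))"
    then obtain v where "v \<in> carrier_vec k" "v \<noteq> 0\<^sub>v k" "B *\<^sub>v v = 0\<^sub>v n"
      using lin_depE[OF B _ dist] by blast
    then show False using inj by blast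
  qed
qed

lemma mat_kernel_eq_image_iff_kernel_dim:
  fixes M B :: "'a::field mat"
  assumes M: "M \<in> carrier_mat nr nc" and B: "B \<in> carrier_mat nc k"
    and inj: "\<And>x. x \<in> carrier_vec k \<Longrightarrow> B *\<^sub>v x = 0\<^sub>v nc \<Longrightarrow> x = 0\<^sub>v k"
    and ker: "\<And>x. x \<in> carrier_vec k \<Longrightarrow> M *\<^sub>v (B *\<^sub>v x) = 0\<^sub>v nr"
  shows "mat_kernel M = {B *\<^sub>v x | x. x \<in> carrier_vec k} \<longleftrightarrow> kernel_dim M = k"
proof -
  interpret K: kernel nr nc M by unfold_locales (rule M)
  define b where "b = set (cols B)"
  note dist = K.NC.distinct_cols_lin_indpt_if_inj(1)[OF B inj]
  have li: "K.NC.lin_indpt b" unfolding b_def by (rule K.NC.distinct_cols_lin_indpt_if_inj(2)[OF B inj])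
  have card_b: "card b = k" unfolding b_def using distinct_card[OF dist] B by (simp add: cols_length)
  have image_B: "{B *\<^sub>v x | x. x \<in> carrier_vec k} = K.NC.span b"
    using K.NC.col_space_eq[OF B] B unfolding K.NC.col_space_def b_def by auto
  have b_ker: "b \<subseteq> mat_kernel M"
  proof
    fix v assume "v \<in> b"
    then obtain j where "j < k" "v = col B j" unfolding b_def using B by (auto simp: cols_def)
    then show "v \<in> mat_kernel M" using ker[of "unit_vec k j"] B M
      by (auto simp: mult_unit_vec_eq_col intro!: mat_kernelI[OF M])
  qed
  have li_ker: "K.Ker.lin_indpt b" using K.lindep_same[OF b_ker] li by simp
  have span_ker: "K.Ker.span b = K.NC.span b" using K.span_same[OF b_ker] .
  have fin_dim: "K.Ker.fin_dim"
  proof -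
    obtain C where "finite C" "K.basis C" using kernel_basis_exists[OF M] by blast
    then show ?thesis unfolding K.Ker.fin_dim_def K.Ker.basis_def by blast
  qed
  show ?thesis
  proof
    assume "mat_kernel M = {B *\<^sub>v x | x. x \<in> carrier_vec k}"
    then have "K.basis b" unfolding K.Ker.basis_def using li_ker span_ker image_B b_ker by simp
    then show "kernel_dim M = k" using K.Ker.dim_basis[of b] card_b unfolding b_def by simp
  next
    assume "kernel_dim M = k"
    then have "K.basis b" using K.Ker.dim_li_is_basis[OF fin_dim _ _ li_ker] b_ker card_b
      unfolding b_def by simp
    then show "mat_kernel M = {B *\<^sub>v x | x. x \<in> carrier_vec k}"
      using span_ker image_B unfolding K.Ker.basis_def by simp
  qed
qed

lemma linear_functional_eq_sum_unit_vec:
  fixes f :: "'a::field vec \<Rightarrow> 'a"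
  assumes add: "\<And>x y. x \<in> carrier_vec N \<Longrightarrow> y \<in> carrier_vec N \<Longrightarrow> f (x + y) = f x + f y"
    and smult: "\<And>c x. x \<in> carrier_vec N \<Longrightarrow> f (c \<cdot>\<^sub>v x) = c * f x"
    and g: "g \<in> carrier_vec N"
  shows "f g = (\<Sum>c<N. f (unit_vec N c) * g $ c)"
proof -
  have "(\<Sum>c<m. f (unit_vec N c) * g $ c) = f (vec N (\<lambda>i. if i < m then g $ i else 0))"
    if "m \<le> N" for m
    using that
  proof (induction m)
    case 0
    have "vec N (\<lambda>i. if i < 0 then g $ i else 0) = 0 \<cdot>\<^sub>v 0\<^sub>v N" by (auto simp: eq_vecI)
    then show ?case using smult[of "0\<^sub>v N" 0] by simp
  next
    case (Suc m)
    have "vec N (\<lambda>i. if i < Suc m then g $ i else 0) =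
      vec N (\<lambda>i. if i < m then g $ i else 0) + g $ m \<cdot>\<^sub>v unit_vec N m"
      using Suc.prems by (intro eq_vecI) (auto simp: unit_vec_def less_Suc_eq)
    then show ?case using Suc by (simp add: add smult)
  qed
  moreover have "vec N (\<lambda>i. if i < N then g $ i else 0) = g" using g by (intro eq_vecI) auto
  ultimately show ?thesis by simp
qed

lemma mat_of_linear_map_mult_vec:
  fixes f :: "'a::field vec \<Rightarrow> 'a vec"
  assumes add: "\<And>x y. x \<in> carrier_vec nc \<Longrightarrow> y \<in> carrier_vec nc \<Longrightarrow> f (x + y) = f x + f y"
    and smult: "\<And>c x. x \<in> carrier_vec nc \<Longrightarrow> f (c \<cdot>\<^sub>v x) = c \<cdot>\<^sub>v f x"
    and dim: "\<And>x. dim_vec (f x) = nr"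
    and g: "g \<in> carrier_vec nc"
  shows "mat nr nc (\<lambda>(r, c). f (unit_vec nc c) $ r) *\<^sub>v g = f g"
proof (rule eq_vecI)
  fix r assume "r < dim_vec (f g)"
  then have r: "r < nr" using dim by simp
  have "f g $ r = (\<Sum>c<nc. f (unit_vec nc c) $ r * g $ c)"
    by (rule linear_functional_eq_sum_unit_vec[where f = "\<lambda>v. f v $ r", OF _ _ g])
      (simp_all add: add smult r dim)
  then show "(mat nr nc (\<lambda>(r, c). f (unit_vec nc c) $ r) *\<^sub>v g) $ r = f g $ r"
    using r g by (simp add: scalar_prod_def lessThan_atLeast0)
qed (simp add: dim)


lemma add_eq_0_vec_imp_eq_uminus:
  fixes v w :: "'a::ab_group_add vec"
  assumes "v \<in> carrier_vec n" "w \<in> carrier_vec n" "v + w = 0\<^sub>v n"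
  shows "w = - v"
proof (rule eq_vecI)
  fix i assume "i < dim_vec (- v)"
  then have i: "i < n" using assms(1) by simp
  then have "(v + w) $ i = 0" using assms(3) by simp
  then show "w $ i = (- v) $ i" using i assms(1,2) by (simp add: add_eq_0_iff)
qed (use assms in simp)

lemma mat_diag_mult_vec:
  assumes "v \<in> carrier_vec m"
  shows "mat_diag m f *\<^sub>v v = vec m (\<lambda>i. f i * v $ i)"
proof (rule eq_vecI)
  fix i assume "i < dim_vec (vec m (\<lambda>i. f i * v $ i))"
  then have i: "i < m" by simp
  have "(mat_diag m f *\<^sub>v v) $ i = (\<Sum>j\<in>{0..<m}. (if i = j then f j else 0) * v $ j)"
    using assms i by (simp add: mat_diag_def scalar_prod_def)
  also have "\<dots> = (\<Sum>j\<in>{0..<m}. if i = j then f j * v $ j else 0)"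
    by (rule sum.cong) auto
  finally show "(mat_diag m f *\<^sub>v v) $ i = vec m (\<lambda>i. f i * v $ i) $ i" using i by simp
qed (simp add: mat_diag_def)

lemma mult_mult_transpose_mult_vec:
  assumes "A \<in> carrier_mat n n" "D \<in> carrier_mat n n" "v \<in> carrier_vec n"
  shows "(A * D * transpose_mat A) *\<^sub>v v = A *\<^sub>v (D *\<^sub>v (transpose_mat A *\<^sub>v v))"
  using assms by (simp add: assoc_mult_mat_vec[of _ n n _ n])

lemma Theta_carrier [simp]: "Theta \<theta> \<in> carrier_mat 3 3"
  by (simp add: Theta_def)

lemma Theta_dims [simp]: "dim_row (Theta \<theta>) = 3" "dim_col (Theta \<theta>) = 3"
  using Theta_carrier[of \<theta>] unfolding carrier_mat_def by simp_all

lemma Theta_mult_vec_carrier [simp]: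
  "Theta \<theta> *\<^sub>v v \<in> carrier_vec 3" "transpose_mat (Theta \<theta>) *\<^sub>v v \<in> carrier_vec 3"
  unfolding carrier_vec_def by simp_all

lemma transpose_Theta_mult_Theta: "transpose_mat (Theta \<theta>) * Theta \<theta> = 1\<^sub>m 3"
proof (rule eq_matI)
  fix i j assume "i < dim_row (1\<^sub>m 3)" "j < dim_col (1\<^sub>m 3)"
  then have "i < 3" "j < 3" by auto
  then show "(transpose_mat (Theta \<theta>) * Theta \<theta>) $$ (i, j) = 1\<^sub>m 3 $$ (i, j)"
    by (auto simp: Theta_def scalar_prod_def numeral_3_eq_3 less_Suc_eq power2_eq_square[symmetric])
qed (simp_all add: Theta_def)

lemma transpose_Theta_mult_Theta_vec:
  "v \<in> carrier_vec 3 \<Longrightarrow> transpose_mat (Theta \<theta>) *\<^sub>v (Theta \<theta> *\<^sub>v v) = v"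
  by (subst assoc_mult_mat_vec[of _ 3 3 _ 3, symmetric]) (auto simp: transpose_Theta_mult_Theta)

lemma rotc_carrier [simp]: "rotc gt \<theta> i \<in> carrier_vec 3"
  by (simp add: rotc_def)

lemma W_mat_carrier [simp]: "W_mat gt \<theta> u v \<in> carrier_mat 3 3"
  unfolding W_mat_def w_mat_def by (rule mult_carrier_mat[of _ 3 3]) auto

lemma W_mat_mult_vec_carrier [simp]:
  "dim_row (W_mat gt \<theta> u v) = 3" "W_mat gt \<theta> u v *\<^sub>v w \<in> carrier_vec 3"
  using W_mat_carrier[of gt \<theta> u v] unfolding carrier_mat_def carrier_vec_def by simp_all

lemma W_mat_mult_Theta:
  assumes "v \<in> carrier_vec 3"
  shows "W_mat gt \<theta> u u' *\<^sub>v (Theta \<theta> *\<^sub>v v)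
    = vec 3 (\<lambda>a. (rotc gt \<theta> u $ a - rotc gt \<theta> u' $ a) * v $ a)"
proof -
  have "W_mat gt \<theta> u u' *\<^sub>v (Theta \<theta> *\<^sub>v v)
      = w_mat gt \<theta> u u' *\<^sub>v (transpose_mat (Theta \<theta>) *\<^sub>v (Theta \<theta> *\<^sub>v v))"
    unfolding W_mat_def w_mat_def by (rule assoc_mult_mat_vec[of _ 3 3 _ 3]) simp_all
  then show ?thesis
    using assms by (simp add: transpose_Theta_mult_Theta_vec w_mat_def mat_diag_mult_vec)
qed

lemma blk_carrier [simp]: "blk g i \<in> carrier_vec 3"
  by (simp add: blk_def)

lemma blk_zero: "i < n \<Longrightarrow> blk (0\<^sub>v (3 * n)) i = 0\<^sub>v 3"
  by (intro eq_vecI) (auto simp: blk_def)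

lemma eq_vec_blkI:
  assumes "g \<in> carrier_vec (3 * n)" "h \<in> carrier_vec (3 * n)" "\<And>i. i < n \<Longrightarrow> blk g i = blk h i"
  shows "g = h"
proof (rule eq_vecI)
  fix r assume "r < dim_vec h"
  then have "r < 3 * n" using assms(2) by simp
  then have "r div 3 < n" by linarith
  then have "blk g (r div 3) $ (r mod 3) = blk h (r div 3) $ (r mod 3)" using assms(3) by simp
  then show "g $ r = h $ r" by (simp add: blk_def)
qed (use assms in simp)

lemma mult_blk_diff_add:
  assumes "W \<in> carrier_mat m 3" "x \<in> carrier_vec (3 * n)" "y \<in> carrier_vec (3 * n)" "i < n" "k < n"
  shows "W *\<^sub>v (blk (x + y) i - blk (x + y) k) = W *\<^sub>v (blk x i - blk x k) + W *\<^sub>v (blk y i - blk y k)"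
proof -
  have "blk (x + y) i - blk (x + y) k = (blk x i - blk x k) + (blk y i - blk y k)"
    using assms(2-5) by (intro eq_vecI) (auto simp: blk_def)
  then show ?thesis using assms(1) by (simp add: mult_add_distrib_mat_vec)
qed

lemma mult_blk_diff_smult:
  assumes "W \<in> carrier_mat m 3" "x \<in> carrier_vec (3 * n)" "i < n" "k < n"
  shows "W *\<^sub>v (blk (c \<cdot>\<^sub>v x) i - blk (c \<cdot>\<^sub>v x) k) = c \<cdot>\<^sub>v (W *\<^sub>v (blk x i - blk x k))"
proof -
  have "blk (c \<cdot>\<^sub>v x) i - blk (c \<cdot>\<^sub>v x) k = c \<cdot>\<^sub>v (blk x i - blk x k)"
    using assms(2-4) by (intro eq_vecI) (auto simp: blk_def algebra_simps)
  then show ?thesis using assms(1) by (simp add: mult_mat_vec)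
qed

abbreviation triples_at :: "nat \<Rightarrow> (nat \<times> nat) set \<Rightarrow> nat \<Rightarrow> (nat \<times> nat \<times> nat) set" where
  "triples_at n E k \<equiv> {(i, j, k'). (i, j, k') \<in> triples n E \<and> k' = k}"

lemma finite_triples_at: "finite (triples_at n E k)"
  by (rule finite_subset[of _ "{..<n} \<times> {..<n} \<times> {..<n}"]) (auto simp: triples_def)

lemma sum_triples_at_cong:
  assumes "\<And>i j. i < n \<Longrightarrow> j < n \<Longrightarrow> k < n \<Longrightarrow> f (i, j, k) = h (i, j, k)"
  shows "sum f (triples_at n E k) = sum h (triples_at n E k)"
  using assms by (intro sum.cong) (auto simp: triples_def)

lemma index_M_block:
  assumes "a < 3"
  shows "M_block n E gt \<theta> g k $ a = (\<Sum>(i, j, _) \<in> triples_at n E k.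
     (W_mat gt \<theta> j k *\<^sub>v (blk g i - blk g k)) $ a + (W_mat gt \<theta> k i *\<^sub>v (blk g j - blk g k)) $ a)"
  unfolding M_block_def using assms
  by (subst index_finsum_vec[OF finite_triples_at]) (auto intro!: sum.cong add_carrier_vec)

lemma M_apply_add:
  assumes x: "x \<in> carrier_vec (3 * n)" and y: "y \<in> carrier_vec (3 * n)"
  shows "M_apply n E gt \<theta> (x + y) = M_apply n E gt \<theta> x + M_apply n E gt \<theta> y"
proof -
  have "M_block n E gt \<theta> (x + y) k $ a = M_block n E gt \<theta> x k $ a + M_block n E gt \<theta> y k $ a"
    if "a < 3" for k a
    unfolding index_M_block[OF that] sum.distrib[symmetric] using that
    \<comment> \<open>split the triple before \<open>simp\<close> enters the summand, where \<open>i, j < n\<close> is not visible\<close>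
    by (intro sum_triples_at_cong) (simp only: prod.case, simp add: mult_blk_diff_add[OF W_mat_carrier x y])
  then show ?thesis by (intro eq_vecI) (simp_all add: M_apply_def)
qed

lemma M_apply_smult:
  assumes x: "x \<in> carrier_vec (3 * n)"
  shows "M_apply n E gt \<theta> (c \<cdot>\<^sub>v x) = c \<cdot>\<^sub>v M_apply n E gt \<theta> x"
proof -
  have "M_block n E gt \<theta> (c \<cdot>\<^sub>v x) k $ a = c * M_block n E gt \<theta> x k $ a"
    if "a < 3" for k a
    unfolding index_M_block[OF that] sum_distrib_left using that
    by (intro sum_triples_at_cong)
      (simp only: prod.case, simp add: mult_blk_diff_smult[OF W_mat_carrier x] algebra_simps)
  then show ?thesis by (intro eq_vecI) (simp_all add: M_apply_def)
qed

lemma M_mat_mult_vec: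
  "g \<in> carrier_vec (3 * n) \<Longrightarrow> M_mat n E gt \<theta> *\<^sub>v g = M_apply n E gt \<theta> g"
  unfolding M_mat_def
  by (rule mat_of_linear_map_mult_vec[OF M_apply_add M_apply_smult]) (simp_all add: M_apply_def)

lemma Pi_set_iff:
  "g \<in> Pi_set n gt \<theta> \<longleftrightarrow> g \<in> carrier_vec (3 * n) \<and>
    (\<exists>s \<in> carrier_vec 3. \<exists>\<tau> \<in> carrier_vec 3. \<forall>i < n.
      blk g i = \<tau> + Theta \<theta> *\<^sub>v vec 3 (\<lambda>a. s $ a * rotc gt \<theta> i $ a))"
  unfolding Pi_set_def
  by (simp add: mult_mult_transpose_mult_vec[of _ 3] mat_diag_mult_vec flip: rotc_def)

lemma M_apply_Pi_set_eq_0: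
  assumes "g \<in> Pi_set n gt \<theta>"
  shows "M_apply n E gt \<theta> g = 0\<^sub>v (3 * n)"
proof -
  obtain s \<tau> where \<tau>: "\<tau> \<in> carrier_vec 3"
    and g: "\<And>i. i < n \<Longrightarrow> blk g i = \<tau> + Theta \<theta> *\<^sub>v vec 3 (\<lambda>a. s $ a * rotc gt \<theta> i $ a)"
    using assms unfolding Pi_set_iff by blast
  have blk_diff: "blk g i - blk g k
      = Theta \<theta> *\<^sub>v vec 3 (\<lambda>a. s $ a * (rotc gt \<theta> i $ a - rotc gt \<theta> k $ a))"
    if "i < n" "k < n" for i k
  proof -
    have "vec 3 (\<lambda>a. s $ a * (rotc gt \<theta> i $ a - rotc gt \<theta> k $ a))
        = vec 3 (\<lambda>a. s $ a * rotc gt \<theta> i $ a) - vec 3 (\<lambda>a. s $ a * rotc gt \<theta> k $ a)"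
      by (intro eq_vecI) (simp_all add: algebra_simps)
    then show ?thesis
      using \<tau> g[OF that(1)] g[OF that(2)]
      by (simp add: mult_minus_distrib_mat_vec[of _ 3 3]) (intro eq_vecI; simp)
  qed
  have "M_block n E gt \<theta> g k $ a = 0" if "a < 3" for k a
    unfolding index_M_block[OF that] using that
    by (subst sum_triples_at_cong[where h = "\<lambda>_. 0"])
      (simp only: prod.case, simp_all add: blk_diff W_mat_mult_Theta algebra_simps)
  then show ?thesis by (intro eq_vecI) (simp_all add: M_apply_def)
qed

text \<open>\<open>Pi_mat n gt \<theta> *\<^sub>v (s @\<^sub>v \<tau>)\<close> is the member of \<open>\<Pi>\<close> with scaling \<open>s\<close> and translation \<open>\<tau>\<close>
  (see \<open>blk_Pi_mat_mult_vec\<close>).\<close>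

definition Pi_mat :: "nat \<Rightarrow> real vec \<Rightarrow> real \<Rightarrow> real mat" where
  "Pi_mat n gt \<theta> = mat (3 * n) 6 (\<lambda>(r, c).
     if c < 3 then Theta \<theta> $$ (r mod 3, c) * rotc gt \<theta> (r div 3) $ c
     else if c - 3 = r mod 3 then 1 else 0)"

lemma Pi_mat_carrier: "Pi_mat n gt \<theta> \<in> carrier_mat (3 * n) 6"
  by (simp add: Pi_mat_def)

lemma blk_Pi_mat_mult_vec:
  assumes s: "s \<in> carrier_vec 3" and \<tau>: "\<tau> \<in> carrier_vec 3" and i: "i < n"
  shows "blk (Pi_mat n gt \<theta> *\<^sub>v (s @\<^sub>v \<tau>)) i
    = \<tau> + Theta \<theta> *\<^sub>v vec 3 (\<lambda>a. s $ a * rotc gt \<theta> i $ a)"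
proof (rule eq_vecI)
  fix a assume "a < dim_vec (\<tau> + Theta \<theta> *\<^sub>v vec 3 (\<lambda>a. s $ a * rotc gt \<theta> i $ a))"
  then have a: "a < 3" using \<tau> by simp
  then have r: "3 * i + a < 3 * n" "(3 * i + a) div 3 = i" "(3 * i + a) mod 3 = a" using i by auto
  have "blk (Pi_mat n gt \<theta> *\<^sub>v (s @\<^sub>v \<tau>)) i $ a
      = (\<Sum>c\<in>{0..<6}. Pi_mat n gt \<theta> $$ (3 * i + a, c) * (s @\<^sub>v \<tau>) $ c)"
    using a r(1) s \<tau> Pi_mat_carrier[of n gt \<theta>] by (simp add: blk_def scalar_prod_def)
  also have "\<dots> = (\<Sum>c\<in>{0..<6}. if c < 3 then Theta \<theta> $$ (a, c) * (s $ c * rotc gt \<theta> i $ c)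
      else if c - 3 = a then \<tau> $ a else 0)"
    using r s \<tau> by (intro sum.cong) (auto simp: Pi_mat_def)
  also have "\<dots> = (\<Sum>c\<in>{0..<3}. Theta \<theta> $$ (a, c) * (s $ c * rotc gt \<theta> i $ c)) + \<tau> $ a"
  proof -
    have "a = 0 \<or> a = 1 \<or> a = 2" using a by auto
    then show ?thesis by (elim disjE) (simp_all add: eval_nat_numeral)
  qed
  also have "\<dots> = (\<tau> + Theta \<theta> *\<^sub>v vec 3 (\<lambda>a. s $ a * rotc gt \<theta> i $ a)) $ a"
    using a \<tau> by (simp add: scalar_prod_def)
  finally show "blk (Pi_mat n gt \<theta> *\<^sub>v (s @\<^sub>v \<tau>)) i $ a = \<dots>" .
qed (simp add: \<tau>)

lemma Pi_set_eq_image_Pi_mat: "Pi_set n gt \<theta> = {Pi_mat n gt \<theta> *\<^sub>v x | x. x \<in> carrier_vec 6}"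
proof (rule subset_antisym; rule subsetI)
  fix g assume "g \<in> Pi_set n gt \<theta>"
  then have g: "g \<in> carrier_vec (3 * n)" and "\<exists>s \<in> carrier_vec 3. \<exists>\<tau> \<in> carrier_vec 3.
      \<forall>i < n. blk g i = \<tau> + Theta \<theta> *\<^sub>v vec 3 (\<lambda>a. s $ a * rotc gt \<theta> i $ a)"
    unfolding Pi_set_iff by simp_all
  then obtain s \<tau> where s: "s \<in> carrier_vec 3" and \<tau>: "\<tau> \<in> carrier_vec 3"
    and blk_g: "\<forall>i < n. blk g i = \<tau> + Theta \<theta> *\<^sub>v vec 3 (\<lambda>a. s $ a * rotc gt \<theta> i $ a)"
    by blast
  have x: "s @\<^sub>v \<tau> \<in> carrier_vec 6" using append_carrier_vec[OF s \<tau>] by simp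
  have "g = Pi_mat n gt \<theta> *\<^sub>v (s @\<^sub>v \<tau>)"
  proof (rule eq_vec_blkI[OF g])
    show "Pi_mat n gt \<theta> *\<^sub>v (s @\<^sub>v \<tau>) \<in> carrier_vec (3 * n)"
      using Pi_mat_carrier x by (rule mult_mat_vec_carrier)
    show "blk g i = blk (Pi_mat n gt \<theta> *\<^sub>v (s @\<^sub>v \<tau>)) i" if "i < n" for i
      using blk_g that blk_Pi_mat_mult_vec[OF s \<tau> that] by simp
  qed
  moreover note x
  ultimately show "g \<in> {Pi_mat n gt \<theta> *\<^sub>v x | x. x \<in> carrier_vec 6}" by blast
next
  fix g assume "g \<in> {Pi_mat n gt \<theta> *\<^sub>v x | x. x \<in> carrier_vec 6}"
  then obtain x where x: "x \<in> carrier_vec (3 + 3)" and g: "g = Pi_mat n gt \<theta> *\<^sub>v x" by auto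
  define s where "s = vec_first x 3"
  define \<tau> where "\<tau> = vec_last x 3"
  have x_eq: "x = s @\<^sub>v \<tau>" using vec_first_last_append[OF x] by (simp add: s_def \<tau>_def)
  have "g \<in> carrier_vec (3 * n)"
    using x unfolding g by (simp add: mult_mat_vec_carrier[OF Pi_mat_carrier])
  moreover have "\<exists>s \<in> carrier_vec 3. \<exists>\<tau> \<in> carrier_vec 3.
      \<forall>i < n. blk g i = \<tau> + Theta \<theta> *\<^sub>v vec 3 (\<lambda>a. s $ a * rotc gt \<theta> i $ a)"
  proof (rule bexI[of _ s], rule bexI[of _ \<tau>])
    show "\<forall>i < n. blk g i = \<tau> + Theta \<theta> *\<^sub>v vec 3 (\<lambda>a. s $ a * rotc gt \<theta> i $ a)"
      unfolding g x_eq by (simp add: blk_Pi_mat_mult_vec s_def \<tau>_def)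
  qed (simp_all add: s_def \<tau>_def)
  ultimately show "g \<in> Pi_set n gt \<theta>" unfolding Pi_set_iff ..
qed

lemma Pi_mat_mult_vec_eq_0_imp_eq_0:
  assumes coord: "\<And>a. a < 3 \<Longrightarrow> \<exists>i<n. \<exists>j<n. rotc gt \<theta> i $ a \<noteq> rotc gt \<theta> j $ a"
    and x: "x \<in> carrier_vec 6" and zero: "Pi_mat n gt \<theta> *\<^sub>v x = 0\<^sub>v (3 * n)"
  shows "x = 0\<^sub>v 6"
proof -
  define s where "s = vec_first x 3"
  define \<tau> where "\<tau> = vec_last x 3"
  have s: "s \<in> carrier_vec 3" and \<tau>: "\<tau> \<in> carrier_vec 3" by (simp_all add: s_def \<tau>_def)
  have x_eq: "x = s @\<^sub>v \<tau>" using vec_first_last_append[of x 3 3] x by (simp add: s_def \<tau>_def)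
  define u where "u i = vec 3 (\<lambda>a. s $ a * rotc gt \<theta> i $ a)" for i
  have Theta_u: "Theta \<theta> *\<^sub>v u i = - \<tau>" if "i < n" for i
  proof (rule add_eq_0_vec_imp_eq_uminus[OF \<tau> Theta_mult_vec_carrier(1)])
    have "\<tau> + Theta \<theta> *\<^sub>v u i = blk (Pi_mat n gt \<theta> *\<^sub>v x) i"
      using blk_Pi_mat_mult_vec[OF s \<tau> that] by (simp add: x_eq u_def)
    also have "\<dots> = 0\<^sub>v 3" using zero blk_zero[OF that] by simp
    finally show "\<tau> + Theta \<theta> *\<^sub>v u i = 0\<^sub>v 3" .
  qed
  have u_eq: "u i = u j" if "i < n" "j < n" for i j
  proof -
    have "u i = transpose_mat (Theta \<theta>) *\<^sub>v (Theta \<theta> *\<^sub>v u i)"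
      by (simp add: u_def transpose_Theta_mult_Theta_vec)
    also have "\<dots> = transpose_mat (Theta \<theta>) *\<^sub>v (Theta \<theta> *\<^sub>v u j)" using Theta_u that by simp
    also have "\<dots> = u j" by (simp add: u_def transpose_Theta_mult_Theta_vec)
    finally show ?thesis .
  qed
  have s0: "s = 0\<^sub>v 3"
  proof (rule eq_vecI)
    fix a assume "a < dim_vec (0\<^sub>v 3 :: real vec)"
    then have a: "a < 3" by simp
    obtain i j where "i < n" "j < n" "rotc gt \<theta> i $ a \<noteq> rotc gt \<theta> j $ a" using coord[OF a] by blast
    moreover have "u i $ a = u j $ a" using u_eq[OF \<open>i < n\<close> \<open>j < n\<close>] by simp
    ultimately show "s $ a = 0\<^sub>v 3 $ a" using a by (simp add: u_def)
  qed (simp add: s)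
  obtain i0 where i0: "i0 < n" using coord[of 0] by auto
  have "\<tau> = 0\<^sub>v 3"
  proof (rule eq_vecI)
    fix a assume "a < dim_vec (0\<^sub>v 3 :: real vec)"
    then have a: "a < 3" by simp
    have "(- \<tau>) $ a = (Theta \<theta> *\<^sub>v u i0) $ a" using Theta_u[OF i0] by simp
    then show "\<tau> $ a = 0\<^sub>v 3 $ a" using a \<tau> by (simp add: u_def s0 scalar_prod_def)
  qed (simp add: \<tau>)
  then show ?thesis using x_eq s0 by (intro eq_vecI) auto
qed

lemma M_mat_mult_Pi_mat_mult_vec:
  assumes "x \<in> carrier_vec 6"
  shows "M_mat n E gt \<theta> *\<^sub>v (Pi_mat n gt \<theta> *\<^sub>v x) = 0\<^sub>v (3 * n)"
proof -
  have g: "Pi_mat n gt \<theta> *\<^sub>v x \<in> Pi_set n gt \<theta>"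
    using assms unfolding Pi_set_eq_image_Pi_mat by blast
  then have "Pi_mat n gt \<theta> *\<^sub>v x \<in> carrier_vec (3 * n)" unfolding Pi_set_iff by blast
  then show ?thesis using M_mat_mult_vec M_apply_Pi_set_eq_0[OF g] by simp
qed

theorem lemma7:
  fixes n :: nat and E :: "(nat \<times> nat) set" and gt :: "real vec" and \<theta> :: real
  assumes E: "E \<subseteq> {(i, k). i < n \<and> k < n \<and> i \<noteq> k}"
    and gt: "gt \<in> carrier_vec (3 * n)"
    and spx: "aff_spans_R {rotc gt \<theta> i $ 0 | i. i < n}"
    and spy: "aff_spans_R {rotc gt \<theta> i $ 1 | i. i < n}"
    and spphi: "aff_spans_R {rotc gt \<theta> i $ 2 | i. i < n}"
  shows "mat_kernel (M_mat n E gt \<theta>) = Pi_set n gt \<theta> \<longleftrightarrow>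
         vec_space.rank (3 * n) (M_mat n E gt \<theta>) = 3 * n - 6"
proof -
  have coord: "\<exists>i<n. \<exists>j<n. rotc gt \<theta> i $ a \<noteq> rotc gt \<theta> j $ a" if "a < 3" for a
  proof -
    have "a = 0 \<or> a = 1 \<or> a = 2" using that by auto
    then show ?thesis using spx spy spphi unfolding aff_spans_R_def by auto
  qed
  obtain i j where "i < n" "j < n" "rotc gt \<theta> i $ 0 \<noteq> rotc gt \<theta> j $ 0"
    using coord[of 0] by auto
  \<comment> \<open>needed because \<open>3 * n - 6\<close> is truncated subtraction\<close>
  then have "2 \<le> n" by (cases "i = j") auto
  have M: "M_mat n E gt \<theta> \<in> carrier_mat (3 * n) (3 * n)" by (simp add: M_mat_def)
  have "mat_kernel (M_mat n E gt \<theta>) = Pi_set n gt \<theta> \<longleftrightarrow> kernel_dim (M_mat n E gt \<theta>) = 6"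
    unfolding Pi_set_eq_image_Pi_mat
    by (rule mat_kernel_eq_image_iff_kernel_dim[OF M Pi_mat_carrier
          Pi_mat_mult_vec_eq_0_imp_eq_0[OF coord] M_mat_mult_Pi_mat_mult_vec])
  then show ?thesis using rank_plus_kernel_dim[OF M] \<open>2 \<le> n\<close> by linarith
qed

end
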